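(* Suppose the jobs are indexed so that $d_1\le d_2\le\dots\le d_n$. Let $\sigma$ be a proper schedule and $\sigma'$ the intermediate schedule obtained from $\sigma$ by an admissible swap at some step $j^*$ between machines $M_h$ and $M_i$. Then $L_{\max}(\sigma')\le L_{\max}(\sigma)$, where $L_{\max}(\tau)=\max_{j\in J}(C_j(\tau)-d_j)$.
   Context: Jobs $J=\{1,\dots,n\}$, job $j$ with positive integer processing time $p_j$ and integer due date $d_j$, are scheduled non-preemptively on $m$ identical machines $M_1,\dots,M_m$; $p_{\max}=\max_j p_j$, $P(X)=\sum_{j\in X}p_j$. A proper schedule $\sigma$ is a partition $J=J_1(\sigma)\cup\dots\cup J_m(\sigma)$, the jobs of $J_i(\sigma)$ processed on $M_i$ consecutively from time $0$ without idle time in increasing index order; $C_j(\sigma)$ is the completion time of $j$. $J_j=\{1,\dots,j\}$, $J_{i,j}(\sigma)=J_i(\sigma)\cap J_j$, $\Delta_{h,i,j}(\sigma)=P(J_{h,j}(\sigma))-P(J_{i,j}(\sigma))$. The swap: admissible for proper $\sigma$ at step $j^*$ with machines $M_h,M_i$ if $j^*\in J_h(\sigma)$, $|J_i(\sigma)\setminus J_{i,j^*}(\sigma)|\ge 2p_{\max}$, and $\Delta_{h,i,j^*}(\sigma)\ge 4p_{\max}^2$. Let $J_I$ be the first (smallest-index) $2p_{\max}$ jobs of $J_i(\sigma)\setminus J_{i,j^*}(\sigma)$ and $J_H$ the last (largest-index) $2p_{\max}$ jobs of $J_{h,j^*}(\sigma)$; choose non-empty $J_{H'}\subseteq J_H$,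 $J_{I'}\subseteq J_I$ with $P(J_{H'})=P(J_{I'})$. The intermediate schedule $\sigma'$: on $M_h$ the time interval occupied by $J_H$ in $\sigma$ is filled by $J_H\setminus J_{H'}$ then $J_{I'}$; on $M_i$ the interval occupied by $J_I$ is filled by $J_{H'}$ then $J_I\setminus J_{I'}$ (each group in its order in $\sigma$); all other jobs keep their positions. *)

theory Defs
  imports Main
begin

text \<open>Jobs are 1..n, machines 1..m. A proper schedule is given by an assignment
  a :: job => machine; on each machine jobs run from time 0, without idle time,
  in increasing index order.\<close>

definition proper :: "nat \<Rightarrow> nat \<Rightarrow> (nat \<Rightarrow> nat) \<Rightarrow> bool" where
  "proper n m a \<longleftrightarrow> (\<forall>j\<in>{1..n}. a j \<in> {1..m})"

definition Jm :: "nat \<Rightarrow> (nat \<Rightarrow> nat) \<Rightarrow> nat \<Rightarrow> nat set" where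
  "Jm n a i = {j\<in>{1..n}. a j = i}"

definition Jpre :: "nat \<Rightarrow> (nat \<Rightarrow> nat) \<Rightarrow> nat \<Rightarrow> nat \<Rightarrow> nat set" where
  "Jpre n a i j = {k\<in>Jm n a i. k \<le> j}"

definition Cp :: "nat \<Rightarrow> (nat \<Rightarrow> nat) \<Rightarrow> (nat \<Rightarrow> nat) \<Rightarrow> nat \<Rightarrow> nat" where
  "Cp n p a j = sum p (Jpre n a (a j) j)"

definition pmax :: "nat \<Rightarrow> (nat \<Rightarrow> nat) \<Rightarrow> nat" where
  "pmax n p = Max (p ` {1..n})"

definition first_k :: "nat set \<Rightarrow> nat \<Rightarrow> nat set" where
  "first_k S k = {x\<in>S. card {y\<in>S. y < x} < k}"

definition last_k :: "nat set \<Rightarrow> nat \<Rightarrow> nat set" where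
  "last_k S k = {x\<in>S. card {y\<in>S. x < y} < k}"

definition admissible ::
  "nat \<Rightarrow> nat \<Rightarrow> (nat \<Rightarrow> nat) \<Rightarrow> (nat \<Rightarrow> nat) \<Rightarrow> nat \<Rightarrow> nat \<Rightarrow> nat \<Rightarrow> bool" where
  "admissible n m p a js h i \<longleftrightarrow>
     h \<in> {1..m} \<and> i \<in> {1..m} \<and> js \<in> Jm n a h \<and>
     card (Jm n a i - Jpre n a i js) \<ge> 2 * pmax n p \<and>
     int (sum p (Jpre n a h js)) - int (sum p (Jpre n a i js)) \<ge> 4 * int (pmax n p) ^ 2"

definition JH :: "nat \<Rightarrow> (nat \<Rightarrow> nat) \<Rightarrow> (nat \<Rightarrow> nat) \<Rightarrow> nat \<Rightarrow> nat \<Rightarrow> nat set" where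
  "JH n p a js h = last_k (Jpre n a h js) (2 * pmax n p)"

definition JI :: "nat \<Rightarrow> (nat \<Rightarrow> nat) \<Rightarrow> (nat \<Rightarrow> nat) \<Rightarrow> nat \<Rightarrow> nat \<Rightarrow> nat set" where
  "JI n p a js i = first_k (Jm n a i - Jpre n a i js) (2 * pmax n p)"

text \<open>Completion times in the intermediate schedule sigma'. The interval occupied by a
  block B (consecutive jobs on machine k in sigma) starts at the total processing time of
  the jobs of machine k preceding B.\<close>
definition swapC ::
  "nat \<Rightarrow> (nat \<Rightarrow> nat) \<Rightarrow> (nat \<Rightarrow> nat) \<Rightarrow> nat \<Rightarrow> nat \<Rightarrow> nat \<Rightarrow> nat set \<Rightarrow> nat set \<Rightarrow> nat \<Rightarrow> nat" where
  "swapC n p a js h i H' I' x =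
     (let JHs = JH n p a js h; JIs = JI n p a js i;
          sH = sum p {k\<in>Jm n a h. k < Min JHs};
          sI = sum p {k\<in>Jm n a i. k < Min JIs}
      in if x \<in> JHs - H' then sH + sum p {y\<in>JHs - H'. y \<le> x}
         else if x \<in> I' then sH + sum p (JHs - H') + sum p {y\<in>I'. y \<le> x}
         else if x \<in> H' then sI + sum p {y\<in>H'. y \<le> x}
         else if x \<in> JIs - I' then sI + sum p H' + sum p {y\<in>JIs - I'. y \<le> x}
         else Cp n p a x)"

definition Lmax :: "nat \<Rightarrow> (nat \<Rightarrow> int) \<Rightarrow> (nat \<Rightarrow> nat) \<Rightarrow> int" where
  "Lmax n d C = Max ((\<lambda>j. int (C j) - d j) ` {1..n})"

end

theory Submission
  imports Defs
begin

(* Every job either completes in the intermediate schedule no later than in the original one, or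
   it is a job j > j* that completes no later than C_{j*}; as due dates are sorted, its lateness is
   then bounded by that of j*.  The jobs of J_H - H' are of the first kind, as they are only moved
   forward within their block; so are those of H', which finish on M_i before J_H starts on M_h:
   both blocks have length at most 2 p_max^2, while the loads of M_h and M_i at step j* differ by at
   least 4 p_max^2.  The jobs of I' and J_I - I' are of the second kind: the former end no later than
   the block J_H ended, i.e. at C_{j*}, the latter no later than the load of M_i at step j* plus
   2 p_max^2. *)

lemma card_first_k_le:
  assumes "finite S"
  shows "card (first_k S k) \<le> k"
proof -
  let ?rank = "\<lambda>x. card {y\<in>S. y < x}"
  have "strict_mono_on (first_k S k) ?rank"
    by (rule strict_mono_onI, rule psubset_card_mono) (auto simp: first_k_def assms)
  then have inj: "inj_on ?rank (first_k S k)"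
    by (rule strict_mono_on_imp_inj_on)
  have "?rank ` first_k S k \<subseteq> {..<k}"
    by (auto simp: first_k_def)
  from card_inj_on_le[OF inj this] show ?thesis
    by simp
qed

lemma card_last_k_le:
  assumes "finite S"
  shows "card (last_k S k) \<le> k"
proof -
  let ?rank = "\<lambda>x. card {y\<in>S. x < y}"
  have "strict_antimono_on (last_k S k) ?rank"
    by (rule monotone_onI, rule psubset_card_mono) (auto simp: last_k_def assms)
  then have inj: "inj_on ?rank (last_k S k)"
    by (simp add: strict_antimono_iff_antimono)
  have "?rank ` last_k S k \<subseteq> {..<k}"
    by (auto simp: last_k_def)
  from card_inj_on_le[OF inj this] show ?thesis
    by simp
qed

lemma first_k_downward_closed:
  assumes "finite S" "x \<in> first_k S k" "y \<in> S" "y \<le> x"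
  shows "y \<in> first_k S k"
proof -
  have "card {z\<in>S. z < y} \<le> card {z\<in>S. z < x}"
    using assms(1,4) by (intro card_mono) auto
  with assms(2,3) show ?thesis
    by (simp add: first_k_def)
qed

lemma last_k_upward_closed:
  assumes "finite S" "x \<in> last_k S k" "y \<in> S" "x \<le> y"
  shows "y \<in> last_k S k"
proof -
  have "card {z\<in>S. y < z} \<le> card {z\<in>S. x < z}"
    using assms(1,4) by (intro card_mono) auto
  with assms(2,3) show ?thesis
    by (simp add: last_k_def)
qed

lemma Jm_iff: "k \<in> Jm n a i \<longleftrightarrow> k \<in> {1..n} \<and> a k = i"
  by (simp add: Jm_def)

lemma Jpre_iff: "k \<in> Jpre n a i j \<longleftrightarrow> k \<in> Jm n a i \<and> k \<le> j"
  by (simp add: Jpre_def)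

lemma finite_Jm [simp]: "finite (Jm n a i)"
  by (simp add: Jm_def)

lemma finite_Jpre [simp]: "finite (Jpre n a i j)"
  by (simp add: Jpre_def)

lemma sum_le_card_mult_pmax:
  assumes "X \<subseteq> {1..n}"
  shows "sum p X \<le> card X * pmax n p"
proof -
  have "p j \<le> pmax n p" if "j \<in> X" for j
    using assms that by (auto simp: pmax_def)
  then show ?thesis
    using sum_bounded_above[of X p "pmax n p"] by simp
qed

lemma sum_first_k_le:
  assumes "finite S" "S \<subseteq> {1..n}"
  shows "sum p (first_k S k) \<le> k * pmax n p"
proof -
  have "sum p (first_k S k) \<le> card (first_k S k) * pmax n p"
    using assms(2) by (intro sum_le_card_mult_pmax) (auto simp: first_k_def)
  also have "\<dots> \<le> k * pmax n p"
    using card_first_k_le[OF assms(1)] by simp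
  finally show ?thesis .
qed

lemma sum_last_k_le:
  assumes "finite S" "S \<subseteq> {1..n}"
  shows "sum p (last_k S k) \<le> k * pmax n p"
proof -
  have "sum p (last_k S k) \<le> card (last_k S k) * pmax n p"
    using assms(2) by (intro sum_le_card_mult_pmax) (auto simp: last_k_def)
  also have "\<dots> \<le> k * pmax n p"
    using card_last_k_le[OF assms(1)] by simp
  finally show ?thesis .
qed

lemma Lmax_le_if_dominated:
  fixes C C' :: "nat \<Rightarrow> nat" and d :: "nat \<Rightarrow> int"
  assumes dsorted: "\<forall>j k. 1 \<le> j \<longrightarrow> j \<le> k \<longrightarrow> k \<le> n \<longrightarrow> d j \<le> d k"
    and j0: "j0 \<in> {1..n}"
    and dominated: "\<And>j. j \<in> {1..n} \<Longrightarrow> C' j \<le> C j \<or> (j0 \<le> j \<and> C' j \<le> C j0)"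
  shows "Lmax n d C' \<le> Lmax n d C"
proof -
  have lateness_le: "int (C k) - d k \<le> Lmax n d C" if "k \<in> {1..n}" for k
    unfolding Lmax_def using that by (intro Max_ge) auto
  have "int (C' j) - d j \<le> Lmax n d C" if j: "j \<in> {1..n}" for j
    using dominated[OF j]
  proof
    assume "C' j \<le> C j"
    with lateness_le[OF j] show ?thesis
      by linarith
  next
    assume later: "j0 \<le> j \<and> C' j \<le> C j0"
    with dsorted j0 j have "d j0 \<le> d j"
      by auto
    with later lateness_le[OF j0] show ?thesis
      by linarith
  qed
  with j0 show ?thesis
    unfolding Lmax_def[of n d C'] by (intro Max.boundedI) auto
qed

locale admissible_swap =
  fixes n m :: nat and p :: "nat \<Rightarrow> nat" and a :: "nat \<Rightarrow> nat"
    and js h i :: nat and H' I' :: "nat set"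
  assumes admissible: "admissible n m p a js h i"
    and H'_subset: "H' \<subseteq> JH n p a js h" and I'_subset: "I' \<subseteq> JI n p a js i"
    and H'_nonempty: "H' \<noteq> {}" and I'_nonempty: "I' \<noteq> {}"
    and sum_H'_eq_sum_I': "sum p H' = sum p I'"
begin

abbreviation "pm \<equiv> pmax n p"
abbreviation "J_H \<equiv> JH n p a js h"
abbreviation "J_I \<equiv> JI n p a js i"
abbreviation "start_H \<equiv> sum p {k\<in>Jm n a h. k < Min J_H}"
abbreviation "start_I \<equiv> sum p {k\<in>Jm n a i. k < Min J_I}"
abbreviation "C' \<equiv> swapC n p a js h i H' I'"

lemma js_job: "js \<in> {1..n}" "a js = h"
  using admissible by (auto simp: admissible_def Jm_iff)

lemma J_H_subset: "J_H \<subseteq> Jpre n a h js"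
  by (auto simp: JH_def last_k_def)

lemma J_I_subset: "J_I \<subseteq> Jm n a i - Jpre n a i js"
  by (auto simp: JI_def first_k_def)

lemma finite_J_H: "finite J_H" and finite_J_I: "finite J_I"
  using J_H_subset J_I_subset by (auto intro: finite_subset)

lemma finite_I': "finite I'"
  using I'_subset finite_J_I by (rule finite_subset)

lemma J_I_after_js: "x \<in> J_I \<Longrightarrow> js < x"
  using J_I_subset by (auto simp: Jpre_iff)

lemma J_H_J_I_disjoint: "J_H \<inter> J_I = {}"
  using J_H_subset J_I_after_js by (fastforce simp: Jpre_iff)

lemma sum_J_H_le: "sum p J_H \<le> 2 * pm * pm"
  unfolding JH_def by (rule sum_last_k_le) (auto simp: Jpre_iff Jm_iff)

lemma sum_J_I_le: "sum p J_I \<le> 2 * pm * pm"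
  unfolding JI_def by (rule sum_first_k_le) (auto simp: Jm_iff)

lemma Min_J_H: "Min J_H \<in> J_H" "x \<in> J_H \<Longrightarrow> Min J_H \<le> x"
proof -
  have "J_H \<noteq> {}"
    using H'_subset H'_nonempty by blast
  then show "Min J_H \<in> J_H" "x \<in> J_H \<Longrightarrow> Min J_H \<le> x"
    using finite_J_H by auto
qed

lemma Min_J_I: "Min J_I \<in> J_I" "x \<in> J_I \<Longrightarrow> Min J_I \<le> x"
proof -
  have "J_I \<noteq> {}"
    using I'_subset I'_nonempty by blast
  then show "Min J_I \<in> J_I" "x \<in> J_I \<Longrightarrow> Min J_I \<le> x"
    using finite_J_I by auto
qed

lemma start_H_plus_prefix_le:
  assumes x: "x \<in> J_H" and X: "X \<subseteq> J_H"
  shows "start_H + sum p {y\<in>X. y \<le> x} \<le> Cp n p a x"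
proof -
  have ax: "a x = h"
    using x J_H_subset by (auto simp: Jpre_iff Jm_iff)
  have "\<forall>y\<in>X. Min J_H \<le> y"
    using X Min_J_H(2) by blast
  then have "start_H + sum p {y\<in>X. y \<le> x}
      = sum p ({k\<in>Jm n a h. k < Min J_H} \<union> {y\<in>X. y \<le> x})"
    using X finite_J_H by (intro sum.union_disjoint[symmetric]) (auto intro: finite_subset)
  also have "\<dots> \<le> sum p (Jpre n a h x)"
    using X J_H_subset Min_J_H(2)[OF x] by (intro sum_mono2) (auto simp: Jpre_iff)
  finally show ?thesis
    by (simp add: Cp_def ax)
qed

lemma start_H_plus_sum_J_H: "start_H + sum p J_H = Cp n p a js"
proof -
  let ?before = "{k\<in>Jm n a h. k < Min J_H}"
  have split: "Jpre n a h js = ?before \<union> J_H"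
  proof (intro equalityI subsetI)
    fix k assume k: "k \<in> Jpre n a h js"
    show "k \<in> ?before \<union> J_H"
    proof (cases "k < Min J_H")
      case True
      with k show ?thesis
        by (simp add: Jpre_iff)
    next
      case False
      then have "Min J_H \<le> k"
        by (rule leI)
      then have "k \<in> last_k (Jpre n a h js) (2 * pm)"
        using last_k_upward_closed[OF finite_Jpre Min_J_H(1)[unfolded JH_def] k]
        by (simp only: JH_def)
      then have "k \<in> J_H"
        by (simp only: JH_def)
      then show ?thesis
        by (rule UnI2)
    qed
  next
    fix k assume "k \<in> ?before \<union> J_H"
    then show "k \<in> Jpre n a h js"
      using J_H_subset Min_J_H(1) by (auto simp: Jpre_iff)
  qed
  \<comment> \<open>not by simp with split: J_H contains Jpre n a h js, so that rewrite would loop\<close>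
  have "Cp n p a js = sum p (?before \<union> J_H)"
    unfolding Cp_def js_job(2) using split by (rule arg_cong)
  also have "\<dots> = start_H + sum p J_H"
  proof (rule sum.union_disjoint)
    show "?before \<inter> J_H = {}"
      using Min_J_H(2) leD by blast
  qed (simp_all add: finite_J_H)
  finally show ?thesis
    by simp
qed

lemma start_I_le: "start_I \<le> sum p (Jpre n a i js)"
proof -
  have "{k\<in>Jm n a i. k < Min J_I} \<subseteq> Jpre n a i js"
  proof
    fix k assume k: "k \<in> {k\<in>Jm n a i. k < Min J_I}"
    show "k \<in> Jpre n a i js"
    proof (rule ccontr)
      assume "k \<notin> Jpre n a i js"
      with k have "k \<in> Jm n a i - Jpre n a i js"
        by simp
      moreover have "k \<le> Min J_I"
        using k by simp
      ultimately have "k \<in> first_k (Jm n a i - Jpre n a i js) (2 * pm)"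
        using first_k_downward_closed[OF finite_Diff[OF finite_Jm] Min_J_I(1)[unfolded JI_def]]
        by (simp only: JI_def)
      then have "k \<in> J_I"
        by (simp only: JI_def)
      with k Min_J_I(2) leD show False
        by blast
    qed
  qed
  then show ?thesis
    by (rule sum_mono2[OF finite_Jpre]) simp
qed

lemma load_gap: "sum p (Jpre n a i js) + 4 * pm * pm \<le> Cp n p a js"
proof -
  have "4 * int pm ^ 2 \<le> int (sum p (Jpre n a h js)) - int (sum p (Jpre n a i js))"
    using admissible unfolding admissible_def by blast
  then have "int (sum p (Jpre n a i js) + 4 * pm * pm) \<le> int (sum p (Jpre n a h js))"
    unfolding power2_eq_square by simp
  then show ?thesis
    unfolding Cp_def js_job(2) by linarith
qed

lemma swapC_eq: "C' x =
   (if x \<in> J_H - H' then start_H + sum p {y\<in>J_H - H'. y \<le> x}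
    else if x \<in> I' then start_H + sum p (J_H - H') + sum p {y\<in>I'. y \<le> x}
    else if x \<in> H' then start_I + sum p {y\<in>H'. y \<le> x}
    else if x \<in> J_I - I' then start_I + sum p H' + sum p {y\<in>J_I - I'. y \<le> x}
    else Cp n p a x)"
  unfolding swapC_def Let_def by (rule refl)

lemma swapC_le_Cp_on_J_H_diff_H':
  assumes x: "x \<in> J_H - H'"
  shows "C' x \<le> Cp n p a x"
proof -
  have "C' x = start_H + sum p {y\<in>J_H - H'. y \<le> x}"
    using x unfolding swapC_eq by (simp only: if_True)
  also have "\<dots> \<le> Cp n p a x"
    using x by (intro start_H_plus_prefix_le) auto
  finally show ?thesis .
qed

lemma swapC_le_Cp_js_on_I':
  assumes x: "x \<in> I'"
  shows "C' x \<le> Cp n p a js"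
proof -
  have "x \<notin> J_H"
    using x I'_subset J_H_J_I_disjoint by blast
  then have "C' x = start_H + sum p (J_H - H') + sum p {y\<in>I'. y \<le> x}"
    using x unfolding swapC_eq by simp
  also have "\<dots> \<le> start_H + sum p (J_H - H') + sum p H'"
    using finite_I' sum_H'_eq_sum_I' by (simp add: sum_mono2)
  also have "\<dots> = Cp n p a js"
    using finite_J_H H'_subset start_H_plus_sum_J_H by (simp add: sum.subset_diff)
  finally show ?thesis .
qed

lemma swapC_le_Cp_on_H':
  assumes x: "x \<in> H'"
  shows "C' x \<le> Cp n p a x"
proof -
  have "x \<notin> I'"
    using x H'_subset I'_subset J_H_J_I_disjoint by blast
  then have "C' x = start_I + sum p {y\<in>H'. y \<le> x}"
    using x unfolding swapC_eq by simp
  also have "\<dots> \<le> start_I + sum p J_H"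
    using finite_J_H H'_subset by (simp add: sum_mono2 subset_iff)
  also have "\<dots> \<le> start_H"
    using start_I_le sum_J_H_le load_gap start_H_plus_sum_J_H by linarith
  also have "\<dots> \<le> Cp n p a x"
    using start_H_plus_prefix_le[of x "{}"] x H'_subset by auto
  finally show ?thesis .
qed

lemma swapC_le_Cp_js_on_J_I_diff_I':
  assumes x: "x \<in> J_I - I'"
  shows "C' x \<le> Cp n p a js"
proof -
  have "x \<notin> J_H" "x \<notin> H'"
    using x H'_subset J_H_J_I_disjoint by blast+
  then have "C' x = start_I + sum p H' + sum p {y\<in>J_I - I'. y \<le> x}"
    using x unfolding swapC_eq by simp
  also have "\<dots> \<le> start_I + sum p I' + sum p (J_I - I')"
    using finite_J_I sum_H'_eq_sum_I' by (simp add: sum_mono2 subset_iff)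
  also have "\<dots> = start_I + sum p J_I"
    using finite_J_I I'_subset by (simp add: sum.subset_diff)
  also have "\<dots> \<le> Cp n p a js"
    using start_I_le sum_J_I_le load_gap by linarith
  finally show ?thesis .
qed

lemma swapC_dominated: "C' x \<le> Cp n p a x \<or> (js \<le> x \<and> C' x \<le> Cp n p a js)"
proof -
  consider (kept_on_h) "x \<in> J_H - H'" | (moved_to_h) "x \<in> I'" | (moved_to_i) "x \<in> H'"
    | (kept_on_i) "x \<in> J_I - I'" | (untouched) "x \<notin> J_H \<union> J_I"
    using H'_subset I'_subset by blast
  then show ?thesis
  proof cases
    case kept_on_h
    then show ?thesis
      using swapC_le_Cp_on_J_H_diff_H' by blast
  next
    case moved_to_h
    then have "js < x"
      using I'_subset J_I_after_js by blast
    with moved_to_h show ?thesis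
      using swapC_le_Cp_js_on_I' by simp
  next
    case moved_to_i
    then show ?thesis
      using swapC_le_Cp_on_H' by blast
  next
    case kept_on_i
    then have "js < x"
      using J_I_after_js by blast
    with kept_on_i show ?thesis
      using swapC_le_Cp_js_on_J_I_diff_I' by simp
  next
    case untouched
    then have "C' x = Cp n p a x"
      using H'_subset I'_subset unfolding swapC_eq by auto
    then show ?thesis
      by simp
  qed
qed

end

theorem lemma7:
  fixes n m :: nat and p :: "nat \<Rightarrow> nat" and d :: "nat \<Rightarrow> int"
    and a :: "nat \<Rightarrow> nat" and js h i :: nat and H' I' :: "nat set"
  assumes ppos: "\<forall>j\<in>{1..n}. p j > 0"
    and dsorted: "\<forall>j k. 1 \<le> j \<longrightarrow> j \<le> k \<longrightarrow> k \<le> n \<longrightarrow> d j \<le> d k"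
    and proper_a: "proper n m a"
    and adm: "admissible n m p a js h i"
    and H'sub: "H' \<subseteq> JH n p a js h" and I'sub: "I' \<subseteq> JI n p a js i"
    and H'ne: "H' \<noteq> {}" and I'ne: "I' \<noteq> {}"
    and eqP: "sum p H' = sum p I'"
  shows "Lmax n d (swapC n p a js h i H' I') \<le> Lmax n d (Cp n p a)"
proof -
  interpret admissible_swap n m p a js h i H' I'
    using adm H'sub I'sub H'ne I'ne eqP by unfold_locales
  show ?thesis
    by (rule Lmax_le_if_dominated[OF dsorted js_job(1) swapC_dominated])
qed

end
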